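(* Let $p$ be an odd prime and $P$ a finite $p$-group of class $2$ and exponent $p$. (i) There are subgroups $Q$ and $A$ of $P$ such that $Z(Q)=Q'=P'$, $A\le Z(P)$ and $P=Q\times A$. (ii) Let $Q,R\le P$ satisfy $Z(Q)=Q'=P'=R'=Z(R)$ and $P=QZ(P)=RZ(P)$. If $A\le Z(P)$ is such that $P=Q\times A$, then also $P=R\times A$. Furthermore, there is an upper central automorphism of $P$ sending $Q$ to $R$ and acting as the identity on $Z(P)$.
   Context: An automorphism $\varphi$ of $P$ is upper central if $Z(P)x\varphi=Z(P)x$ for all $x\in P$. $P'$ denotes the commutator subgroup and $Z(\cdot)$ the center. *)

theory Defs
  imports "HOL-Algebra.Algebra"
begin

definition centre :: "('a, 'b) monoid_scheme \<Rightarrow> 'a set \<Rightarrow> 'a set" where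
  "centre G H = {z \<in> H. \<forall>h \<in> H. z \<otimes>\<^bsub>G\<^esub> h = h \<otimes>\<^bsub>G\<^esub> z}"

definition p_group :: "nat \<Rightarrow> ('a, 'b) monoid_scheme \<Rightarrow> bool" where
  "p_group p G \<longleftrightarrow> group G \<and> finite (carrier G) \<and> (\<exists>n. order G = p ^ n)"

text \<open>Exponent p: every element satisfies x^p = 1 (for p prime and G nontrivial this is exponent exactly p).\<close>
definition has_exponent :: "nat \<Rightarrow> ('a, 'b) monoid_scheme \<Rightarrow> bool" where
  "has_exponent e G \<longleftrightarrow> (\<forall>x \<in> carrier G. x [^]\<^bsub>G\<^esub> e = \<one>\<^bsub>G\<^esub>)"

text \<open>Nilpotency class exactly 2: gamma_2 = G' is nontrivial and gamma_3 = [G',G] = 1,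
  i.e. G' is a nontrivial subgroup of Z(G).\<close>
definition nilpotent_class_2 :: "('a, 'b) monoid_scheme \<Rightarrow> bool" where
  "nilpotent_class_2 G \<longleftrightarrow>
     derived G (carrier G) \<noteq> {\<one>\<^bsub>G\<^esub>} \<and> derived G (carrier G) \<subseteq> centre G (carrier G)"

definition internal_direct_product :: "('a, 'b) monoid_scheme \<Rightarrow> 'a set \<Rightarrow> 'a set \<Rightarrow> bool" where
  "internal_direct_product G Q A \<longleftrightarrow>
     Q \<lhd> G \<and> A \<lhd> G \<and> Q <#>\<^bsub>G\<^esub> A = carrier G \<and> Q \<inter> A = {\<one>\<^bsub>G\<^esub>}"

definition upper_central_aut :: "('a, 'b) monoid_scheme \<Rightarrow> ('a \<Rightarrow> 'a) \<Rightarrow> bool" where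
  "upper_central_aut G \<phi> \<longleftrightarrow> \<phi> \<in> iso G G \<and>
     (\<forall>x \<in> carrier G. \<phi> ` (centre G (carrier G) #>\<^bsub>G\<^esub> x) = centre G (carrier G) #>\<^bsub>G\<^esub> x)"

end

(*
  (i) In a finite group of prime exponent, a subgroup S meeting a normal subgroup K trivially
  can be enlarged by one cyclic factor at a time, keeping S \<inter> K = 1, until S K covers any
  prescribed subgroup (the prime exponent makes every non-trivial element of <x> generate <x>).
  Done inside Z(P) against P', this gives a central A with Z(P) = A P' and A \<inter> P' = 1; done
  above P' against A, it gives Q \<supseteq> P' with P = Q A and Q \<inter> A = 1.  Central factors do not
  change commutators, so Q' = P', and the Dedekind law gives Z(Q) = Q \<inter> Z(P) = P'.

  (ii) Q \<inter> Z(P) = P' = R \<inter> Z(P), so the Dedekind law makes R a complement of A as well.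
  Writing x = q a with q = r b (q \<in> Q, r \<in> R, a, b \<in> A), the map x \<mapsto> r a = x b\<inverse> is an
  automorphism that moves every element by a central factor and fixes A and Q \<inter> R \<supseteq> P',
  hence all of Z(P) = (Z(P) \<inter> Q) A.
*)

theory Submission
  imports Defs
begin

section \<open>Central factors\<close>

context group begin

abbreviation ZG :: "'a set" where "ZG \<equiv> centre G (carrier G)"

lemma centre_commute: "z \<in> centre G H \<Longrightarrow> h \<in> H \<Longrightarrow> z \<otimes> h = h \<otimes> z"
  unfolding centre_def by blast

lemma inv_commute:
  "x \<in> carrier G \<Longrightarrow> y \<in> carrier G \<Longrightarrow> x \<otimes> y = y \<otimes> x \<Longrightarrow> inv x \<otimes> y = y \<otimes> inv x"
  by (simp add: inv_solve_left inv_solve_right m_assoc)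

lemma subgroup_centre:
  assumes "subgroup H G" shows "subgroup (centre G H) G"
proof (rule subgroupI)
  show "centre G H \<subseteq> carrier G"
    using subgroup.subset[OF assms] unfolding centre_def by blast
  show "centre G H \<noteq> {}"
    using subgroup.one_closed[OF assms] subgroup.mem_carrier[OF assms] unfolding centre_def by force
next
  fix z assume "z \<in> centre G H"
  then show "inv z \<in> centre G H"
    using subgroup.m_inv_closed[OF assms] subgroup.mem_carrier[OF assms]
    unfolding centre_def by (auto simp: inv_commute)
next
  fix z w assume z: "z \<in> centre G H" and w: "w \<in> centre G H"
  have zw: "z \<in> carrier G" "w \<in> carrier G"
    using z w subgroup.mem_carrier[OF assms] unfolding centre_def by auto
  have "z \<otimes> w \<otimes> h = h \<otimes> (z \<otimes> w)" if h: "h \<in> H" for h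
  proof -
    have "z \<otimes> w \<otimes> h = z \<otimes> (h \<otimes> w)"
      using centre_commute[OF w h] zw subgroup.mem_carrier[OF assms h] by (simp add: m_assoc)
    also have "\<dots> = h \<otimes> (z \<otimes> w)"
      using centre_commute[OF z h] zw subgroup.mem_carrier[OF assms h] by (simp flip: m_assoc)
    finally show ?thesis .
  qed
  then show "z \<otimes> w \<in> centre G H"
    using z w subgroup.m_closed[OF assms] unfolding centre_def by blast
qed

lemma inter_centre_subset_centre: "Q \<subseteq> carrier G \<Longrightarrow> Q \<inter> ZG \<subseteq> centre G Q"
  unfolding centre_def by blast

lemma central_subgroup_normal:
  assumes "subgroup A G" "A \<subseteq> ZG" shows "A \<lhd> G"
  unfolding normal_inv_iff
proof (intro conjI ballI)
  fix x a assume x: "x \<in> carrier G" and a: "a \<in> A"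
  have "a \<in> carrier G" "x \<otimes> a = a \<otimes> x"
    using a assms x centre_commute[of a "carrier G" x] unfolding centre_def by auto
  then show "x \<otimes> a \<otimes> inv x \<in> A"
    using a x by (simp add: m_assoc)
qed (rule assms(1))

lemma normal_if_derived_subset:
  assumes "subgroup H G" "derived G (carrier G) \<subseteq> H" shows "H \<lhd> G"
  unfolding normal_inv_iff
proof (intro conjI ballI)
  fix x h assume x: "x \<in> carrier G" and h: "h \<in> H"
  have hc: "h \<in> carrier G" using subgroup.mem_carrier[OF assms(1) h] .
  have "x \<otimes> h \<otimes> inv x \<otimes> inv h \<in> derived G (carrier G)"
    unfolding derived_def using x hc by (blast intro: generate.incl)
  then have "(x \<otimes> h \<otimes> inv x \<otimes> inv h) \<otimes> h \<in> H"
    using assms h by (blast intro: subgroup.m_closed)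
  then show "x \<otimes> h \<otimes> inv x \<in> H"
    using x hc by (simp add: m_assoc)
qed (rule assms(1))

lemma mult_central_swap:
  assumes "g \<in> carrier G" "h \<in> carrier G" "a \<in> ZG" "b \<in> ZG"
  shows "(g \<otimes> a) \<otimes> (h \<otimes> b) = (g \<otimes> h) \<otimes> (a \<otimes> b)"
proof -
  have "a \<in> carrier G" "b \<in> carrier G"
    using assms(3,4) unfolding centre_def by auto
  have "(g \<otimes> a) \<otimes> (h \<otimes> b) = g \<otimes> ((a \<otimes> h) \<otimes> b)"
    using assms(1,2) \<open>a \<in> carrier G\<close> \<open>b \<in> carrier G\<close> by (simp add: m_assoc)
  also have "\<dots> = g \<otimes> ((h \<otimes> a) \<otimes> b)"
    by (simp add: centre_commute[OF assms(3,2)])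
  also have "\<dots> = (g \<otimes> h) \<otimes> (a \<otimes> b)"
    using assms(1,2) \<open>a \<in> carrier G\<close> \<open>b \<in> carrier G\<close> by (simp add: m_assoc)
  finally show ?thesis .
qed

lemma commutator_mult_central:
  assumes "x \<in> carrier G" "y \<in> carrier G" "a \<in> ZG" "b \<in> ZG"
  shows "(x \<otimes> a) \<otimes> (y \<otimes> b) \<otimes> inv (x \<otimes> a) \<otimes> inv (y \<otimes> b) = x \<otimes> y \<otimes> inv x \<otimes> inv y"
proof -
  have ab: "a \<in> carrier G" "b \<in> carrier G"
    using assms(3,4) unfolding centre_def by auto
  have cancel: "u \<otimes> (inv u \<otimes> w) = w" if "u \<in> carrier G" "w \<in> carrier G" for u w
    using that by (simp flip: m_assoc)
  have "(x \<otimes> a) \<otimes> (y \<otimes> b) \<otimes> inv (x \<otimes> a) \<otimes> inv (y \<otimes> b)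
      = ((x \<otimes> a) \<otimes> (y \<otimes> b)) \<otimes> inv ((y \<otimes> b) \<otimes> (x \<otimes> a))"
    using assms(1,2) ab by (simp add: m_assoc inv_mult_group)
  also have "\<dots> = ((x \<otimes> y) \<otimes> (a \<otimes> b)) \<otimes> inv ((y \<otimes> x) \<otimes> (a \<otimes> b))"
    using mult_central_swap[OF assms] mult_central_swap[OF assms(2,1,4,3)]
      centre_commute[OF assms(4) ab(1)] by simp
  also have "\<dots> = (x \<otimes> y) \<otimes> inv (y \<otimes> x)"
    using assms(1,2) ab by (simp add: m_assoc inv_mult_group cancel)
  also have "\<dots> = x \<otimes> y \<otimes> inv x \<otimes> inv y"
    using assms(1,2) by (simp add: m_assoc inv_mult_group)
  finally show ?thesis .
qed

lemma centre_of_central_complement: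
  assumes "Q \<subseteq> carrier G" "Q <#> A = carrier G" "A \<subseteq> ZG"
  shows "centre G Q = Q \<inter> ZG"
proof
  show "centre G Q \<subseteq> Q \<inter> ZG"
  proof
    fix z assume z: "z \<in> centre G Q"
    have "z \<otimes> x = x \<otimes> z" if "x \<in> carrier G" for x
    proof -
      obtain q a where q: "q \<in> Q" and a: "a \<in> A" and x: "x = q \<otimes> a"
        using \<open>x \<in> carrier G\<close> assms(2) unfolding set_mult_def by blast
      have "z \<in> carrier G" "q \<in> carrier G" "a \<in> carrier G"
        using z q a assms unfolding centre_def by auto
      moreover have "a \<otimes> z = z \<otimes> a"
        using centre_commute[of a "carrier G" z] a assms(3) \<open>z \<in> carrier G\<close> by blast
      ultimately show ?thesis
        using centre_commute[OF z q] unfolding x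
        by (simp flip: m_assoc) (simp add: m_assoc)
    qed
    then show "z \<in> Q \<inter> ZG"
      using z assms(1) unfolding centre_def by blast
  qed
qed (rule inter_centre_subset_centre[OF assms(1)])

lemma derived_eq_of_central_complement:
  assumes "Q \<subseteq> carrier G" "Q <#> A = carrier G" "A \<subseteq> ZG"
  shows "derived G Q = derived G (carrier G)"
proof
  show "derived G Q \<subseteq> derived G (carrier G)"
    using mono_derived[OF assms(1)] .
  have "derived_set G (carrier G) \<subseteq> derived_set G Q"
  proof
    fix c assume "c \<in> derived_set G (carrier G)"
    then obtain x y where "x \<in> carrier G" "y \<in> carrier G" and c: "c = x \<otimes> y \<otimes> inv x \<otimes> inv y"
      by blast
    then obtain q1 a1 q2 a2 where q: "q1 \<in> Q" "q2 \<in> Q" and a: "a1 \<in> A" "a2 \<in> A"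
      and xy: "x = q1 \<otimes> a1" "y = q2 \<otimes> a2"
      using assms(2) unfolding set_mult_def by blast
    have "c = q1 \<otimes> q2 \<otimes> inv q1 \<otimes> inv q2"
      unfolding c xy using q a assms(1,3) by (intro commutator_mult_central) auto
    then show "c \<in> derived_set G Q"
      using q by blast
  qed
  also have "derived_set G Q \<subseteq> derived G Q"
    unfolding derived_def by (blast intro: generate.incl)
  finally show "derived G (carrier G) \<subseteq> derived G Q"
    unfolding derived_def[of G "carrier G"]
    using generate_subgroup_incl derived_is_subgroup[OF assms(1)] by blast
qed

section \<open>The Dedekind law\<close>

lemma dedekind_law:
  assumes "subgroup H G" "K \<subseteq> H" "L \<subseteq> carrier G"
  shows "H \<inter> (L <#> K) = (H \<inter> L) <#> K"
proof
  show "H \<inter> (L <#> K) \<subseteq> (H \<inter> L) <#> K"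
  proof
    fix x assume "x \<in> H \<inter> (L <#> K)"
    then obtain l k where x: "x \<in> H" "x = l \<otimes> k" and l: "l \<in> L" and k: "k \<in> K"
      unfolding set_mult_def by blast
    have kH: "k \<in> H" using k assms(2) by blast
    have "l \<in> carrier G" "k \<in> carrier G"
      using l assms(3) subgroup.mem_carrier[OF assms(1) kH] by auto
    then have "l = x \<otimes> inv k"
      using x by (simp add: m_assoc)
    moreover have "x \<otimes> inv k \<in> H"
      using subgroup.m_closed[OF assms(1) x(1) subgroup.m_inv_closed[OF assms(1) kH]] .
    ultimately have "l \<in> H" by simp
    then show "x \<in> (H \<inter> L) <#> K"
      using x l k unfolding set_mult_def by blast
  qed
  show "(H \<inter> L) <#> K \<subseteq> H \<inter> (L <#> K)"
  proof
    fix x assume "x \<in> (H \<inter> L) <#> K"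
    then obtain l k where "x = l \<otimes> k" "l \<in> H \<inter> L" "k \<in> K"
      unfolding set_mult_def by blast
    then show "x \<in> H \<inter> (L <#> K)"
      using assms(1,2) subgroup.m_closed[of H G l k] unfolding set_mult_def by blast
  qed
qed

lemma centre_eq_inter_set_mult:
  assumes "Q \<subseteq> carrier G" "Q <#> A = carrier G" "A \<subseteq> ZG"
  shows "ZG = (ZG \<inter> Q) <#> A"
proof -
  have Z: "subgroup ZG G"
    using subgroup_centre[OF subgroup_self] .
  have "ZG = ZG \<inter> (Q <#> A)"
    using subgroup.subset[OF Z] by (simp add: assms(2) Int_absorb2)
  also have "\<dots> = (ZG \<inter> Q) <#> A"
    using dedekind_law[OF Z assms(3,1)] .
  finally show ?thesis .
qed

lemma central_complement_transfer:
  assumes "subgroup R G" "subgroup A G" "A \<subseteq> ZG" "Q \<subseteq> carrier G"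
    and "Q <#> A = carrier G" "Q \<inter> A = {\<one>}" "R <#> ZG = carrier G" "Q \<inter> ZG = R \<inter> ZG"
  shows "R <#> A = carrier G" "R \<inter> A = {\<one>}"
proof -
  have "carrier G = R <#> ((ZG \<inter> Q) <#> A)"
    using assms(7) centre_eq_inter_set_mult[OF assms(4,5,3)] by simp
  also have "\<dots> = (R <#> (ZG \<inter> Q)) <#> A"
    using set_mult_assoc[of R "ZG \<inter> Q" A] subgroup.subset[OF assms(1)] subgroup.subset[OF assms(2)]
      assms(4) by auto
  also have "\<dots> \<subseteq> (R <#> R) <#> A"
    using assms(8) by (intro mono_set_mult) auto
  finally have "carrier G \<subseteq> R <#> A"
    using subgroup_mult_id[OF assms(1)] by simp
  then show "R <#> A = carrier G"
    using set_mult_closed[OF subgroup.subset[OF assms(1)] subgroup.subset[OF assms(2)]] by blast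
  show "R \<inter> A = {\<one>}"
    using assms(3,6,8) subgroup.one_closed[OF assms(1)] subgroup.one_closed[OF assms(2)] by blast
qed

section \<open>Complements in groups of prime exponent\<close>

lemma mem_generate_of_prime_exponent:
  assumes x: "x \<in> carrier G" and p: "Factorial_Ring.prime (p::nat)" "x [^] p = \<one>"
    and y: "y \<in> generate G {x}" "y \<noteq> \<one>"
  shows "x \<in> generate G {y}"
proof -
  obtain k :: int where k: "y = x [^] k"
    using y(1) unfolding generate_pow[OF x] by blast
  have xp: "x [^] (int p * j) = \<one>" for j :: int
    using p(2) x by (simp flip: int_pow_pow add: int_pow_int)
  have "\<not> int p dvd k"
    using xp k y(2) by (auto elim: dvdE)
  then have "coprime (int p) k"
    using p(1) by (intro prime_imp_coprime) auto
  then obtain u v where uv: "u * k + v * int p = 1"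
    using bezout_int[of k "int p"] by (auto simp: coprime_iff_gcd_eq_1 gcd.commute)
  have "x = x [^] (u * k + v * int p)"
    using x uv by simp
  also have "\<dots> = y [^] u"
    using x xp[of v] k by (simp add: int_pow_mult int_pow_pow mult.commute)
  finally have "x = y [^] u" .
  moreover have "y \<in> carrier G"
    using k x by simp
  ultimately show ?thesis
    using generate_pow[of y] by blast
qed

lemma set_mult_generate_extension:
  assumes S: "S \<lhd> G" and K: "K \<lhd> G" "S \<inter> K = {\<one>}"
    and x: "x \<in> carrier G" "Factorial_Ring.prime (p::nat)" "x [^] p = \<one>" "x \<notin> S <#> K"
  shows "subgroup (S <#> generate G {x}) G" "insert x S \<subseteq> S <#> generate G {x}"
    "(S <#> generate G {x}) \<inter> K = {\<one>}"
proof -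
  have S_sub: "subgroup S G" and K_sub: "subgroup K G"
    using S K(1) normal_imp_subgroup by auto
  have gen: "subgroup (generate G {x}) G" "x \<in> generate G {x}"
    using generate_is_subgroup[of "{x}"] x(1) generate.incl[of x "{x}"] by auto
  show "subgroup (S <#> generate G {x}) G"
    using mult_norm_subgroup[OF S gen(1)] .
  have "s \<otimes> \<one> \<in> S <#> generate G {x}" if "s \<in> S" for s
    using that subgroup.one_closed[OF gen(1)] unfolding set_mult_def by blast
  moreover have "\<one> \<otimes> x \<in> S <#> generate G {x}"
    using subgroup.one_closed[OF S_sub] gen(2) unfolding set_mult_def by blast
  ultimately show T: "insert x S \<subseteq> S <#> generate G {x}"
    using subgroup.mem_carrier[OF S_sub] x(1) by auto
  have "w = \<one>" if w: "w \<in> S <#> generate G {x}" "w \<in> K" for w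
  proof -
    obtain s y where s: "s \<in> S" and y: "y \<in> generate G {x}" and wsy: "w = s \<otimes> y"
      using w(1) unfolding set_mult_def by blast
    have sc: "s \<in> carrier G" and yc: "y \<in> carrier G"
      using subgroup.mem_carrier[OF S_sub s] subgroup.mem_carrier[OF gen(1) y] by auto
    have "y = inv s \<otimes> w"
      using wsy sc yc by (simp flip: m_assoc)
    then have y_SK: "y \<in> S <#> K"
      using subgroup.m_inv_closed[OF S_sub s] w(2) unfolding set_mult_def by blast
    have "y = \<one>"
    proof (rule ccontr)
      assume "y \<noteq> \<one>"
      then have "x \<in> generate G {y}"
        using mem_generate_of_prime_exponent x(1-3) y by blast
      also have "generate G {y} \<subseteq> S <#> K"
        using y_SK mult_norm_subgroup[OF S K_sub] by (intro generate_subgroup_incl) auto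
      finally show False
        using x(4) by blast
    qed
    then show "w = \<one>"
      using wsy sc s w(2) K(2) by auto
  qed
  then show "(S <#> generate G {x}) \<inter> K = {\<one>}"
    using T subgroup.one_closed[OF S_sub] subgroup.one_closed[OF K_sub] by blast
qed

lemma exists_complement_of_prime_exponent:
  assumes fin: "finite (carrier G)"
    and p: "Factorial_Ring.prime (p::nat)" "\<forall>x\<in>carrier G. x [^] p = \<one>"
    and M: "subgroup M G" and H: "subgroup H G" "H \<subseteq> M" and K: "K \<lhd> G" "H \<inter> K = {\<one>}"
    and normal: "\<And>S. subgroup S G \<Longrightarrow> H \<subseteq> S \<Longrightarrow> S \<subseteq> M \<Longrightarrow> S \<lhd> G"
  shows "\<exists>S. subgroup S G \<and> H \<subseteq> S \<and> S \<subseteq> M \<and> S \<inter> K = {\<one>} \<and> M \<subseteq> S <#> K"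
proof -
  define F where "F = {S. subgroup S G \<and> H \<subseteq> S \<and> S \<subseteq> M \<and> S \<inter> K = {\<one>}}"
  have "F \<subseteq> Pow (carrier G)"
    unfolding F_def using subgroup.subset by blast
  then have "finite F"
    using fin by (meson finite_Pow_iff finite_subset)
  moreover have "H \<in> F"
    unfolding F_def using H(1,2) K(2) subgroup.subset[OF M] by auto
  ultimately obtain S where "S \<in> F" and S_max: "\<And>T. T \<in> F \<Longrightarrow> S \<subseteq> T \<Longrightarrow> T = S"
    using finite_has_maximal[of F] by blast
  then have S: "subgroup S G" "H \<subseteq> S" "S \<subseteq> M" "S \<inter> K = {\<one>}"
    unfolding F_def by auto
  have "x \<in> S <#> K" if x: "x \<in> M" for x
  proof (rule ccontr)
    assume x_notin: "x \<notin> S <#> K"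
    have xc: "x \<in> carrier G"
      using subgroup.mem_carrier[OF M x] .
    define T where "T = S <#> generate G {x}"
    note T = set_mult_generate_extension[OF normal[OF S(1-3)] K(1) S(4) xc p(1) bspec[OF p(2) xc]
        x_notin, folded T_def]
    have "generate G {x} \<subseteq> M"
      using generate_subgroup_incl[of "{x}" M] M x by auto
    then have "T \<subseteq> M"
      unfolding T_def set_mult_def using S(3) subgroup.m_closed[OF M] by auto
    then have "T \<in> F"
      unfolding F_def using T S(2) by blast
    then have "x \<in> S"
      using S_max T(2) by blast
    moreover have "x = x \<otimes> \<one>" "\<one> \<in> K"
      using xc subgroup.one_closed[OF normal_imp_subgroup[OF K(1)]] by auto
    ultimately show False
      using x_notin unfolding set_mult_def by blast
  qed
  then show ?thesis
    using S by blast
qed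

lemma class_two_prime_exponent_decomposition:
  assumes fin: "finite (carrier G)"
    and p: "Factorial_Ring.prime (p::nat)" "\<forall>x\<in>carrier G. x [^] p = \<one>"
    and DZ: "derived G (carrier G) \<subseteq> ZG"
  shows "\<exists>Q A. subgroup Q G \<and> subgroup A G \<and> centre G Q = derived G Q \<and>
           derived G Q = derived G (carrier G) \<and> A \<subseteq> ZG \<and> internal_direct_product G Q A"
proof -
  define D where "D = derived G (carrier G)"
  have D: "subgroup D G" "D \<lhd> G"
    unfolding D_def using derived_is_subgroup[OF subset_refl] derived_is_normal[OF normal_self] .
  have Z: "subgroup ZG G"
    using subgroup_centre[OF subgroup_self] .
  obtain A where A: "subgroup A G" "A \<subseteq> ZG" "A \<inter> D = {\<one>}" "ZG \<subseteq> A <#> D"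
    using exists_complement_of_prime_exponent[OF fin p Z triv_subgroup _ D(2)]
      central_subgroup_normal subgroup.one_closed[OF Z] subgroup.one_closed[OF D(1)] by auto
  then obtain Q where Q: "subgroup Q G" "D \<subseteq> Q" "Q \<inter> A = {\<one>}" "carrier G \<subseteq> Q <#> A"
    using exists_complement_of_prime_exponent[OF fin p subgroup_self D(1) _ central_subgroup_normal]
      normal_if_derived_subset D_def subgroup.subset[OF D(1)]
    by (metis Int_commute)
  have QA: "Q <#> A = carrier G"
    using Q(4) set_mult_closed[OF subgroup.subset[OF Q(1)] subgroup.subset[OF A(1)]] by blast
  have derived_Q: "derived G Q = D"
    unfolding D_def using derived_eq_of_central_complement[OF subgroup.subset[OF Q(1)] QA A(2)] .
  have "Q \<inter> ZG \<subseteq> Q \<inter> (A <#> D)"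
    using A(4) by blast
  also have "\<dots> = (Q \<inter> A) <#> D"
    using dedekind_law[OF Q(1,2) subgroup.subset[OF A(1)]] .
  also have "\<dots> = D"
    using Q(3) lcos_mult_one[OF subgroup.subset[OF D(1)]] by (simp add: l_coset_eq_set_mult)
  finally have "centre G Q = D"
    using centre_of_central_complement[OF subgroup.subset[OF Q(1)] QA A(2)] Q(2) DZ D_def by blast
  moreover have "internal_direct_product G Q A"
    unfolding internal_direct_product_def
    using normal_if_derived_subset[OF Q(1)] central_subgroup_normal[OF A(1,2)]
      QA Q(2,3) D_def by blast
  ultimately show ?thesis
    using Q(1) A(1,2) derived_Q D_def by blast
qed

section \<open>Complements of a central subgroup\<close>

lemma set_mult_decomp_unique:
  assumes H: "subgroup H G" and A: "subgroup A G" "H \<inter> A = {\<one>}"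
    and "h1 \<in> H" "h2 \<in> H" "a1 \<in> A" "a2 \<in> A" "h1 \<otimes> a1 = h2 \<otimes> a2"
  shows "h1 = h2 \<and> a1 = a2"
proof -
  have c: "h1 \<in> carrier G" "h2 \<in> carrier G" "a1 \<in> carrier G" "a2 \<in> carrier G"
    using assms(4-7) subgroup.mem_carrier[OF H] subgroup.mem_carrier[OF A(1)] by auto
  have "h2 \<otimes> (a2 \<otimes> inv a1) = (h1 \<otimes> a1) \<otimes> inv a1"
    using assms(8) c by (simp flip: m_assoc)
  also have "\<dots> = h1"
    using c by (simp add: m_assoc)
  finally have "inv h2 \<otimes> h1 = a2 \<otimes> inv a1"
    using c by (auto simp flip: m_assoc)
  moreover have "inv h2 \<otimes> h1 \<in> H" "a2 \<otimes> inv a1 \<in> A"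
    using subgroup.m_closed[OF H subgroup.m_inv_closed[OF H assms(5)] assms(4)]
      subgroup.m_closed[OF A(1) assms(7) subgroup.m_inv_closed[OF A(1) assms(6)]] .
  ultimately have "inv h2 \<otimes> h1 = \<one>"
    using A(2) by (metis IntI singletonD)
  then have "h2 \<otimes> (inv h2 \<otimes> h1) = h2"
    using c by simp
  then have "h1 = h2"
    using c by (simp flip: m_assoc)
  then show ?thesis
    using assms(8) c by simp
qed

lemma upper_central_autI:
  assumes iso: "\<phi> \<in> iso G G" and fix_centre: "\<And>z. z \<in> ZG \<Longrightarrow> \<phi> z = z"
    and central_shift: "\<And>x. x \<in> carrier G \<Longrightarrow> \<exists>c\<in>ZG. \<phi> x = x \<otimes> c"
  shows "upper_central_aut G \<phi>"
  unfolding upper_central_aut_def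
proof (intro conjI ballI)
  fix x assume x: "x \<in> carrier G"
  obtain c where c: "c \<in> ZG" "\<phi> x = x \<otimes> c"
    using central_shift[OF x] by blast
  have Z: "subgroup ZG G"
    using subgroup_centre[OF subgroup_self] .
  have cc: "c \<in> carrier G"
    using subgroup.mem_carrier[OF Z c(1)] .
  have \<phi>_coset: "\<phi> (z \<otimes> x) = (z \<otimes> c) \<otimes> x" if z: "z \<in> ZG" for z
  proof -
    have zc: "z \<in> carrier G"
      using subgroup.mem_carrier[OF Z z] .
    have "\<phi> (z \<otimes> x) = \<phi> z \<otimes> \<phi> x"
      using iso zc x unfolding iso_def by (simp add: hom_mult)
    also have "\<dots> = z \<otimes> (x \<otimes> c)"
      using fix_centre[OF z] c(2) by simp
    also have "\<dots> = (z \<otimes> c) \<otimes> x"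
      using centre_commute[OF c(1) x] zc cc x by (simp add: m_assoc)
    finally show ?thesis .
  qed
  show "\<phi> ` (ZG #> x) = ZG #> x"
  proof
    show "\<phi> ` (ZG #> x) \<subseteq> ZG #> x"
    proof
      fix y assume "y \<in> \<phi> ` (ZG #> x)"
      then obtain z where z: "z \<in> ZG" "y = \<phi> (z \<otimes> x)"
        unfolding r_coset_def by blast
      then show "y \<in> ZG #> x"
        unfolding r_coset_def using \<phi>_coset[OF z(1)] subgroup.m_closed[OF Z z(1) c(1)] by blast
    qed
    show "ZG #> x \<subseteq> \<phi> ` (ZG #> x)"
    proof
      fix y assume "y \<in> ZG #> x"
      then obtain z where z: "z \<in> ZG" "y = z \<otimes> x"
        unfolding r_coset_def by blast
      have zc: "z \<otimes> inv c \<in> ZG"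
        using subgroup.m_closed[OF Z z(1) subgroup.m_inv_closed[OF Z c(1)]] .
      have "\<phi> ((z \<otimes> inv c) \<otimes> x) = y"
        using \<phi>_coset[OF zc] z subgroup.mem_carrier[OF Z z(1)] cc by (simp add: m_assoc)
      then show "y \<in> \<phi> ` (ZG #> x)"
        unfolding r_coset_def using zc by blast
    qed
  qed
qed (rule iso)

end

locale central_complements = group +
  fixes A Q R
  assumes A_subgroup: "subgroup A G" and A_central: "A \<subseteq> centre G (carrier G)"
    and Q_subgroup: "subgroup Q G" and Q_complement: "Q <#> A = carrier G" "Q \<inter> A = {\<one>}"
    and R_subgroup: "subgroup R G" and R_complement: "R <#> A = carrier G" "R \<inter> A = {\<one>}"
begin

lemma A_carrier: "a \<in> A \<Longrightarrow> a \<in> carrier G"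
  using subgroup.mem_carrier[OF A_subgroup] .

lemma Q_carrier: "q \<in> Q \<Longrightarrow> q \<in> carrier G"
  using subgroup.mem_carrier[OF Q_subgroup] .

lemma R_carrier: "r \<in> R \<Longrightarrow> r \<in> carrier G"
  using subgroup.mem_carrier[OF R_subgroup] .

definition complement_swap :: "'a \<Rightarrow> 'a" where
  "complement_swap x =
     (THE y. \<exists>q\<in>Q. \<exists>a\<in>A. \<exists>r\<in>R. \<exists>b\<in>A. x = q \<otimes> a \<and> q = r \<otimes> b \<and> y = r \<otimes> a)"

lemma complement_swap_eq:
  assumes "q \<in> Q" "a \<in> A" "r \<in> R" "b \<in> A" "q = r \<otimes> b"
  shows "complement_swap (q \<otimes> a) = r \<otimes> a"
  unfolding complement_swap_def
proof (rule the_equality)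
  show "\<exists>q'\<in>Q. \<exists>a'\<in>A. \<exists>r'\<in>R. \<exists>b'\<in>A. q \<otimes> a = q' \<otimes> a' \<and> q' = r' \<otimes> b' \<and> r \<otimes> a = r' \<otimes> a'"
    using assms by blast
next
  fix y assume "\<exists>q'\<in>Q. \<exists>a'\<in>A. \<exists>r'\<in>R. \<exists>b'\<in>A. q \<otimes> a = q' \<otimes> a' \<and> q' = r' \<otimes> b' \<and> y = r' \<otimes> a'"
  then obtain q' a' r' b' where "q' \<in> Q" "a' \<in> A" "r' \<in> R" "b' \<in> A"
    and "q \<otimes> a = q' \<otimes> a'" "q' = r' \<otimes> b'" "y = r' \<otimes> a'"
    by blast
  then show "y = r \<otimes> a"
    using assms set_mult_decomp_unique[OF Q_subgroup A_subgroup Q_complement(2)]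
      set_mult_decomp_unique[OF R_subgroup A_subgroup R_complement(2)] by metis
qed

lemma complement_decomp:
  assumes "x \<in> carrier G"
  obtains q a r b where "q \<in> Q" "a \<in> A" "r \<in> R" "b \<in> A" "x = q \<otimes> a" "q = r \<otimes> b"
proof -
  obtain q a where qa: "q \<in> Q" "a \<in> A" "x = q \<otimes> a"
    using assms Q_complement(1) unfolding set_mult_def by blast
  moreover obtain r b where "r \<in> R" "b \<in> A" "q = r \<otimes> b"
    using Q_carrier[OF qa(1)] R_complement(1) unfolding set_mult_def by blast
  ultimately show thesis
    using that by blast
qed

lemma complement_swap_shift:
  assumes "x \<in> carrier G"
  shows "\<exists>c\<in>A. complement_swap x = x \<otimes> c"
proof -
  obtain q a r b where d: "q \<in> Q" "a \<in> A" "r \<in> R" "b \<in> A" "x = q \<otimes> a" "q = r \<otimes> b"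
    using complement_decomp[OF assms] .
  have c: "a \<in> carrier G" "b \<in> carrier G" "r \<in> carrier G"
    using d A_carrier R_carrier by auto
  have "x \<otimes> inv b = r \<otimes> (b \<otimes> a \<otimes> inv b)"
    using d(5,6) c by (simp add: m_assoc)
  also have "b \<otimes> a \<otimes> inv b = a \<otimes> b \<otimes> inv b"
    using centre_commute[of b "carrier G" a] d(4) A_central c(1) by auto
  also have "r \<otimes> (a \<otimes> b \<otimes> inv b) = r \<otimes> a"
    using c by (simp add: m_assoc)
  also have "\<dots> = complement_swap x"
    using complement_swap_eq d by simp
  finally show ?thesis
    using subgroup.m_inv_closed[OF A_subgroup d(4)] by metis
qed

lemma complement_swap_closed: "x \<in> carrier G \<Longrightarrow> complement_swap x \<in> carrier G"
  using complement_swap_shift A_carrier by fastforce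

lemma complement_swap_hom: "complement_swap \<in> hom G G"
proof (rule homI)
  fix x y assume x: "x \<in> carrier G" and y: "y \<in> carrier G"
  obtain q1 a1 r1 b1 where d1: "q1 \<in> Q" "a1 \<in> A" "r1 \<in> R" "b1 \<in> A" "x = q1 \<otimes> a1" "q1 = r1 \<otimes> b1"
    using complement_decomp[OF x] .
  obtain q2 a2 r2 b2 where d2: "q2 \<in> Q" "a2 \<in> A" "r2 \<in> R" "b2 \<in> A" "y = q2 \<otimes> a2" "q2 = r2 \<otimes> b2"
    using complement_decomp[OF y] .
  have central: "a1 \<in> ZG" "a2 \<in> ZG" "b1 \<in> ZG" "b2 \<in> ZG"
    using d1 d2 A_central by auto
  have xy: "x \<otimes> y = (q1 \<otimes> q2) \<otimes> (a1 \<otimes> a2)"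
    using mult_central_swap[OF Q_carrier Q_carrier] d1 d2 central by simp
  have "q1 \<otimes> q2 = (r1 \<otimes> r2) \<otimes> (b1 \<otimes> b2)"
    using mult_central_swap[OF R_carrier R_carrier] d1 d2 central by simp
  from complement_swap_eq[OF subgroup.m_closed[OF Q_subgroup d1(1) d2(1)]
      subgroup.m_closed[OF A_subgroup d1(2) d2(2)] subgroup.m_closed[OF R_subgroup d1(3) d2(3)]
      subgroup.m_closed[OF A_subgroup d1(4) d2(4)] this]
  have "complement_swap (x \<otimes> y) = (r1 \<otimes> r2) \<otimes> (a1 \<otimes> a2)"
    unfolding xy .
  also have "\<dots> = (r1 \<otimes> a1) \<otimes> (r2 \<otimes> a2)"
    using mult_central_swap[OF R_carrier[OF d1(3)] R_carrier[OF d2(3)] central(1,2)] by simp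
  also have "\<dots> = complement_swap x \<otimes> complement_swap y"
    using d1 d2 complement_swap_eq by simp
  finally show "complement_swap (x \<otimes> y) = complement_swap x \<otimes> complement_swap y" .
qed (rule complement_swap_closed)

lemma complement_swap_fixes: "x \<in> (Q \<inter> R) \<union> A \<Longrightarrow> complement_swap x = x"
  using complement_swap_eq[of x \<one> x \<one>] complement_swap_eq[of \<one> x \<one> \<one>]
    subgroup.one_closed[OF A_subgroup] subgroup.one_closed[OF Q_subgroup]
    subgroup.one_closed[OF R_subgroup] Q_carrier A_carrier by auto

lemma complement_swap_image: "complement_swap ` Q = R"
proof
  show "complement_swap ` Q \<subseteq> R"
  proof
    fix y assume "y \<in> complement_swap ` Q"
    then obtain q where q: "q \<in> Q" "y = complement_swap q"
      by blast
    obtain r b where rb: "r \<in> R" "b \<in> A" "q = r \<otimes> b"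
      using Q_carrier[OF q(1)] R_complement(1) unfolding set_mult_def by blast
    have "complement_swap (q \<otimes> \<one>) = r \<otimes> \<one>"
      using complement_swap_eq[OF q(1) subgroup.one_closed[OF A_subgroup] rb] .
    then show "y \<in> R"
      using q rb(1) Q_carrier R_carrier by simp
  qed
  show "R \<subseteq> complement_swap ` Q"
  proof
    fix r assume r: "r \<in> R"
    obtain q c where qc: "q \<in> Q" "c \<in> A" "r = q \<otimes> c"
      using R_carrier[OF r] Q_complement(1) unfolding set_mult_def by blast
    have "q = r \<otimes> inv c"
      using qc Q_carrier[OF qc(1)] A_carrier[OF qc(2)] by (simp add: m_assoc)
    then have "complement_swap (q \<otimes> \<one>) = r \<otimes> \<one>"
      using complement_swap_eq[OF qc(1) subgroup.one_closed[OF A_subgroup] r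
          subgroup.m_inv_closed[OF A_subgroup qc(2)]] by blast
    then show "r \<in> complement_swap ` Q"
      using qc(1) Q_carrier R_carrier[OF r] by force
  qed
qed

lemma complement_swap_iso: "complement_swap \<in> iso G G"
proof -
  interpret swap: group_hom G G complement_swap
    using complement_swap_hom by unfold_locales
  have "x = \<one>" if x: "x \<in> carrier G" "complement_swap x = \<one>" for x
  proof -
    obtain c where c: "c \<in> A" "complement_swap x = x \<otimes> c"
      using complement_swap_shift[OF x(1)] by blast
    then have "x \<otimes> c = \<one>"
      using x(2) by simp
    then have "x = inv c"
      using x(1) A_carrier[OF c(1)] by (simp add: inv_equality)
    then have "x \<in> A"
      using subgroup.m_inv_closed[OF A_subgroup c(1)] by simp
    then show ?thesis
      using complement_swap_fixes x(2) by auto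
  qed
  then have "inj_on complement_swap (carrier G)"
    using swap.inj_iff_trivial_ker unfolding kernel_def by auto
  moreover have "complement_swap ` carrier G = carrier G"
  proof
    show "complement_swap ` carrier G \<subseteq> carrier G"
      using complement_swap_closed by blast
    show "carrier G \<subseteq> complement_swap ` carrier G"
    proof
      fix y assume "y \<in> carrier G"
      then obtain r a where ra: "r \<in> R" "a \<in> A" "y = r \<otimes> a"
        using R_complement(1) unfolding set_mult_def by blast
      obtain q c where qc: "q \<in> Q" "c \<in> A" "r = q \<otimes> c"
        using R_carrier[OF ra(1)] Q_complement(1) unfolding set_mult_def by blast
      have "q = r \<otimes> inv c"
        using qc Q_carrier[OF qc(1)] A_carrier[OF qc(2)] by (simp add: m_assoc)
      then have "complement_swap (q \<otimes> a) = y"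
        using complement_swap_eq[OF qc(1) ra(2,1) subgroup.m_inv_closed[OF A_subgroup qc(2)]] ra(3)
        by blast
      moreover have "q \<otimes> a \<in> carrier G"
        using Q_carrier[OF qc(1)] A_carrier[OF ra(2)] by simp
      ultimately show "y \<in> complement_swap ` carrier G"
        by blast
    qed
  qed
  ultimately show ?thesis
    unfolding iso_def bij_betw_def using complement_swap_hom by blast
qed

theorem complement_swap_upper_central:
  assumes "Q \<inter> ZG \<subseteq> R"
  shows "upper_central_aut G complement_swap" "\<forall>z\<in>ZG. complement_swap z = z"
proof -
  have ZG_decomp: "ZG = (ZG \<inter> Q) <#> A"
    using centre_eq_inter_set_mult[OF subgroup.subset[OF Q_subgroup] Q_complement(1) A_central] .
  have fix_centre: "complement_swap z = z" if z: "z \<in> ZG" for z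
  proof -
    obtain w a where w: "w \<in> ZG \<inter> Q" and a: "a \<in> A" and zwa: "z = w \<otimes> a"
      using z ZG_decomp unfolding set_mult_def by blast
    have "w \<in> Q \<inter> R"
      using w assms by blast
    then have "complement_swap z = complement_swap w \<otimes> complement_swap a"
      using zwa hom_mult[OF complement_swap_hom] Q_carrier A_carrier[OF a] by simp
    then show ?thesis
      using complement_swap_fixes a \<open>w \<in> Q \<inter> R\<close> zwa by simp
  qed
  then show "\<forall>z\<in>ZG. complement_swap z = z"
    by blast
  have "\<exists>c\<in>ZG. complement_swap x = x \<otimes> c" if "x \<in> carrier G" for x
    using complement_swap_shift[OF that] A_central by blast
  then show "upper_central_aut G complement_swap"
    using upper_central_autI[OF complement_swap_iso fix_centre] by blast
qed

end

context group begin

lemma complements_of_equal_centre: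
  assumes Q: "subgroup Q G" "centre G Q = derived G Q" "derived G Q = derived G (carrier G)"
    and R: "subgroup R G" "derived G (carrier G) = derived G R" "derived G R = centre G R"
      "R <#> ZG = carrier G"
    and A: "subgroup A G" "A \<subseteq> ZG" "internal_direct_product G Q A"
  shows "internal_direct_product G R A \<and>
    (\<exists>\<phi>. upper_central_aut G \<phi> \<and> \<phi> ` Q = R \<and> (\<forall>z\<in>ZG. \<phi> z = z))"
proof -
  define D where "D = derived G (carrier G)"
  have D: "D \<subseteq> Q" "D \<subseteq> R"
    using derived_incl[OF subset_refl Q(1)] derived_incl[OF subset_refl R(1)] Q(3) R(2) D_def by auto
  have QR_centre: "Q \<inter> ZG = R \<inter> ZG"
    using inter_centre_subset_centre[OF subgroup.subset[OF Q(1)]]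
      inter_centre_subset_centre[OF subgroup.subset[OF R(1)]] Q(2,3) R(2,3) D D_def by auto
  have QA: "Q <#> A = carrier G" "Q \<inter> A = {\<one>}"
    using A(3) unfolding internal_direct_product_def by auto
  note RA = central_complement_transfer[OF R(1) A(1,2) subgroup.subset[OF Q(1)] QA R(4) QR_centre]
  interpret central_complements G A Q R
    unfolding central_complements_def central_complements_axioms_def
    using is_group A(1,2) Q(1) QA R(1) RA by blast
  have "internal_direct_product G R A"
    unfolding internal_direct_product_def
    using normal_if_derived_subset[OF R(1)] central_subgroup_normal[OF A(1,2)] RA D D_def
    by blast
  moreover have "Q \<inter> ZG \<subseteq> R"
    using QR_centre by blast
  ultimately show ?thesis
    using complement_swap_upper_central complement_swap_image by blast
qed

end

theorem lemma2p3:
  fixes p :: nat and P :: "('a, 'b) monoid_scheme"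
  assumes "Factorial_Ring.prime p" and "odd p"
    and "p_group p P"
    and "nilpotent_class_2 P"
    and "has_exponent p P"
  shows "(\<exists>Q A. subgroup Q P \<and> subgroup A P \<and>
            centre P Q = derived P Q \<and> derived P Q = derived P (carrier P) \<and>
            A \<subseteq> centre P (carrier P) \<and> internal_direct_product P Q A)
       \<and> (\<forall>Q R. subgroup Q P \<and> subgroup R P \<and>
            centre P Q = derived P Q \<and> derived P Q = derived P (carrier P) \<and>
            derived P (carrier P) = derived P R \<and> derived P R = centre P R \<and>
            Q <#>\<^bsub>P\<^esub> centre P (carrier P) = carrier P \<and>
            R <#>\<^bsub>P\<^esub> centre P (carrier P) = carrier P \<longrightarrow>
              (\<forall>A. subgroup A P \<and> A \<subseteq> centre P (carrier P) \<and> internal_direct_product P Q A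
                     \<longrightarrow> internal_direct_product P R A)
            \<and> (\<exists>\<phi>. upper_central_aut P \<phi> \<and> \<phi> ` Q = R \<and>
                    (\<forall>z \<in> centre P (carrier P). \<phi> z = z)))"
proof -
  interpret group P
    using assms(3) unfolding p_group_def by blast
  have fin: "finite (carrier P)"
    using assms(3) unfolding p_group_def by blast
  have exponent: "\<forall>x\<in>carrier P. x [^]\<^bsub>P\<^esub> p = \<one>\<^bsub>P\<^esub>"
    using assms(5) unfolding has_exponent_def .
  have "derived P (carrier P) \<subseteq> centre P (carrier P)"
    using assms(4) unfolding nilpotent_class_2_def by blast
  note part_i = class_two_prime_exponent_decomposition[OF fin assms(1) exponent this]
  then obtain Q0 A0 where Q0: "subgroup Q0 P" "centre P Q0 = derived P Q0"
      "derived P Q0 = derived P (carrier P)"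
    and A0: "subgroup A0 P" "A0 \<subseteq> centre P (carrier P)" "internal_direct_product P Q0 A0"
    by blast
  show ?thesis
  proof (rule conjI[OF part_i], intro allI impI)
    fix Q R
    assume QR: "subgroup Q P \<and> subgroup R P \<and>
      centre P Q = derived P Q \<and> derived P Q = derived P (carrier P) \<and>
      derived P (carrier P) = derived P R \<and> derived P R = centre P R \<and>
      Q <#>\<^bsub>P\<^esub> centre P (carrier P) = carrier P \<and> R <#>\<^bsub>P\<^esub> centre P (carrier P) = carrier P"
    have "internal_direct_product P Q A0"
      using complements_of_equal_centre[OF Q0 _ _ _ _ A0] QR by auto
    then show "(\<forall>A. subgroup A P \<and> A \<subseteq> centre P (carrier P) \<and> internal_direct_product P Q A
                  \<longrightarrow> internal_direct_product P R A)
      \<and> (\<exists>\<phi>. upper_central_aut P \<phi> \<and> \<phi> ` Q = R \<and> (\<forall>z \<in> centre P (carrier P). \<phi> z = z))"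
      using complements_of_equal_centre[of Q R] QR A0(1,2) by blast
  qed
qed

end
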